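(* Let $S$ be a $d\times d$ symmetric positive semidefinite matrix and $L,U$ symmetric matrices with entries in $\mathbb{R}\cup\{\pm\infty\}$, $L_{ij}\le0\le U_{ij}$ for $i\ne j$ and $L_{ii}=U_{ii}=0$. Let $\widehat K$ be the optimum of minimizing $-\log\det K+\operatorname{tr}(SK)+\sum_{i\neq j}\max\{L_{ij}K_{ij},U_{ij}K_{ij}\}$ over positive definite $K$ (convention $\pm\infty\cdot0=0$), and let $\widehat G$ be the graph on $\{1,\dots,d\}$ with edge $ij$ ($i\neq j$) iff $\widehat K_{ij}\ne0$. For all $(i,j)$ with $\widehat K_{ij}\ne0$ (including $i=j$), define $\widehat S_{ij}=S_{ij}+L_{ij}$ if $\widehat K_{ij}<0$ and $\widehat S_{ij}=S_{ij}+U_{ij}$ if $\widehat K_{ij}>0$. Then $\widehat K$ equals the maximum likelihood estimator in the Gaussian graphical model $M(\widehat G)$ with sufficient statistics $(\widehat S_{ij})$, i.e. the unique positive definite $K$ with $K_{ij}=0$ whenever $i\ne j$ and $ij$ is not an edge of $\widehat G$, and $(K^{-1})_{ij}=\widehat S_{ij}$ whenever $\widehat K_{ij}\ne0$. *)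

theory Defs
  imports "HOL-Analysis.Analysis"
begin

definition sym_mat :: "'b ^'n^'n \<Rightarrow> bool" where
  "sym_mat A \<longleftrightarrow> (\<forall>i j. A $ i $ j = A $ j $ i)"

definition psd_mat :: "real^'n^'n \<Rightarrow> bool" where
  "psd_mat A \<longleftrightarrow> sym_mat A \<and> (\<forall>x. 0 \<le> x \<bullet> (A *v x))"

definition pd_mat :: "real^'n^'n \<Rightarrow> bool" where
  "pd_mat A \<longleftrightarrow> sym_mat A \<and> (\<forall>x. x \<noteq> 0 \<longrightarrow> 0 < x \<bullet> (A *v x))"

text \<open>The penalized objective
  -log det K + tr(SK) + sum_{i<>j} max(L_ij K_ij, U_ij K_ij),
  valued in the extended reals (in ereal, (+-infinity) * 0 = 0).\<close>

definition pen_obj :: "real^'n^'n \<Rightarrow> ereal^'n^'n \<Rightarrow> ereal^'n^'n \<Rightarrow> real^'n^'n \<Rightarrow> ereal" where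
  "pen_obj S L U K =
     ereal (- ln (det K) + trace (S ** K)) +
     (\<Sum>i\<in>UNIV. \<Sum>j\<in>UNIV - {i}.
        max (L $ i $ j * ereal (K $ i $ j)) (U $ i $ j * ereal (K $ i $ j)))"

text \<open>Sufficient statistics S-hat, defined where Khat_ij <> 0.\<close>

definition shat :: "real^'n^'n \<Rightarrow> ereal^'n^'n \<Rightarrow> ereal^'n^'n \<Rightarrow> real^'n^'n \<Rightarrow> 'n \<Rightarrow> 'n \<Rightarrow> ereal" where
  "shat S L U Khat i j =
     (if Khat $ i $ j < 0 then ereal (S $ i $ j) + L $ i $ j
      else ereal (S $ i $ j) + U $ i $ j)"

definition ggm_mle :: "('n \<Rightarrow> 'n \<Rightarrow> bool) \<Rightarrow> ('n \<Rightarrow> 'n \<Rightarrow> ereal) \<Rightarrow> real^'n^'n \<Rightarrow> bool" where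
  "ggm_mle E Sh K \<longleftrightarrow> pd_mat K \<and>
     (\<forall>i j. i \<noteq> j \<and> \<not> E i j \<longrightarrow> K $ i $ j = 0) \<and>
     (\<forall>i j. (i = j \<or> E i j) \<longrightarrow> ereal (matrix_inv K $ i $ j) = Sh i j)"

end

(*
  Since the penalized objective is finite at Khat, every penalty term max (L_ij K_ij) (U_ij K_ij)
  is finite there, and on the matrices with the sign pattern of Khat the penalty is the linear
  function tr (C K), where C_ij is U_ij or L_ij according to the sign of Khat_ij. Moving along
  e_ij + e_ji with Khat_ij <> 0 preserves this sign pattern for small steps, so Khat minimizes
  the smooth function -log det K + tr ((S + C) K) along that line; as the derivative of
  log det (K + tE) at 0 is tr (K^-1 E), this gives (Khat^-1)_ij = S_ij + C_ij = Shat_ij.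

  Uniqueness: if K1 and K2 both solve the likelihood equations, their inverses agree wherever
  D = K1 - K2 is nonzero, hence tr (K1^-1 D K2^-1 D) = tr ((K2^-1 - K1^-1) D) = 0, and this
  forces D = 0 because K1^-1 and K2^-1 are positive definite.
*)

theory Submission
  imports Defs
begin

section \<open>Matrix algebra\<close>

lemma sym_mat_iff_transpose_eq: "sym_mat A \<longleftrightarrow> transpose A = A"
  by (auto simp: sym_mat_def transpose_def vec_eq_iff)

lemma
  fixes A :: "'a::semiring_1^'n^'m"
  assumes "invertible A"
  shows matrix_inv_right: "A ** matrix_inv A = mat 1"
    and matrix_inv_left: "matrix_inv A ** A = mat 1"
proof -
  have "\<exists>A'. A ** A' = mat 1 \<and> A' ** A = mat 1"
    using assms by (simp add: invertible_def)
  then have "A ** matrix_inv A = mat 1 \<and> matrix_inv A ** A = mat 1"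
    unfolding matrix_inv_def by (rule someI_ex)
  then show "A ** matrix_inv A = mat 1" "matrix_inv A ** A = mat 1" by auto
qed

lemma matrix_add_rdistrib: "((B :: 'a::semiring_1^'n^'m) + C) ** A = B ** A + C ** A"
  by (simp add: vec_eq_iff matrix_matrix_mult_def sum.distrib algebra_simps)

lemma matrix_diff_ldistrib: "(A :: 'a::comm_ring_1^'n^'m) ** (B - C) = A ** B - A ** C"
  by (simp add: vec_eq_iff matrix_matrix_mult_def sum_subtractf algebra_simps)

lemma matrix_diff_rdistrib: "((B :: 'a::comm_ring_1^'n^'m) - C) ** A = B ** A - C ** A"
  by (simp add: vec_eq_iff matrix_matrix_mult_def sum_subtractf algebra_simps)

lemma trace_matrix_mult: "trace (X ** Y) = (\<Sum>a\<in>UNIV. \<Sum>b\<in>UNIV. X $ a $ b * Y $ b $ a)"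
  by (simp add: trace_def matrix_matrix_mult_def)

lemma trace_transpose_mult_mult:
  fixes B Z :: "real^'n^'n"
  shows "trace (transpose Z ** B ** Z) = (\<Sum>k\<in>UNIV. column k Z \<bullet> (B *v column k Z))"
  unfolding matrix_mul_assoc[symmetric]
  by (simp add: trace_def matrix_matrix_mult_def matrix_vector_mult_def transpose_def column_def
      inner_vec_def)

lemma trace_mult_add_scaleR:
  fixes M K E :: "real^'n^'n"
  shows "trace (M ** (K + t *\<^sub>R E)) = trace (M ** K) + t * trace (M ** E)"
  by (simp add: matrix_add_ldistrib matrix_scalar_ac trace_add trace_def sum_distrib_left sum.distrib
      flip: scalar_matrix_assoc)

definition sym_unit_mat :: "'n \<Rightarrow> 'n \<Rightarrow> real^'n^'n" where
  "sym_unit_mat i j = (\<chi> a b. if a = i \<and> b = j \<or> a = j \<and> b = i then 1 else 0)"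

lemma sym_mat_sym_unit_mat: "sym_mat (sym_unit_mat i j)"
  by (auto simp: sym_mat_def sym_unit_mat_def)

lemma trace_mult_sym_unit_mat:
  assumes "sym_mat M"
  shows "trace (M ** sym_unit_mat i j) = (if i = j then 1 else 2) * M $ i $ j"
proof (cases "i = j")
  case True
  then have "M $ a $ b * sym_unit_mat i j $ b $ a
      = (if b = i then if a = i then M $ i $ i else 0 else 0)" for a b
    by (simp add: sym_unit_mat_def)
  with True show ?thesis by (simp add: trace_matrix_mult)
next
  case False
  with assms have "M $ a $ b * sym_unit_mat i j $ b $ a
      = (if b = j then if a = i then M $ i $ j else 0 else 0)
        + (if b = i then if a = j then M $ i $ j else 0 else 0)" for a b
    by (auto simp: sym_unit_mat_def sym_mat_def)
  with False show ?thesis by (simp add: trace_matrix_mult sum.distrib)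
qed

lemma sgn_add_scaleR_sym_unit_mat:
  fixes K :: "real^'n^'n"
  assumes "sym_mat K" "\<bar>t\<bar> < \<bar>K $ i $ j\<bar>"
  shows "sgn ((K + t *\<^sub>R sym_unit_mat i j) $ a $ b) = sgn (K $ a $ b)"
  using assms by (auto simp: sym_unit_mat_def sym_mat_def sgn_if)

section \<open>Positive definite matrices\<close>

lemma inner_matrix_vector_mult_diff_axis:
  fixes A :: "real^'n^'n"
  assumes "sym_mat A"
  shows "(x - \<alpha> *\<^sub>R axis c 1) \<bullet> (A *v (x - \<alpha> *\<^sub>R axis c 1))
    = x \<bullet> (A *v x) - 2 * \<alpha> * (A *v x) $ c + \<alpha>\<^sup>2 * A $ c $ c"
proof -
  have "x \<bullet> column c A = (A *v x) $ c"
    using assms by (simp add: inner_vec_def column_def matrix_vector_mult_def sym_mat_def mult.commute)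
  then show ?thesis
    by (simp add: matrix_vector_mult_diff_distrib matrix_vector_mult_basis inner_axis' column_def
        inner_diff_left inner_diff_right power2_eq_square algebra_simps)
qed

lemma pd_mat_mat_1: "pd_mat (mat 1)"
proof -
  have "sym_mat (mat 1 :: real^'n^'n)"
    by (simp add: sym_mat_def mat_def)
  then show ?thesis by (simp add: pd_mat_def)
qed

lemma pd_mat_diag_pos:
  assumes "pd_mat A"
  shows "0 < A $ i $ i"
proof -
  have "0 < axis i 1 \<bullet> (A *v axis i 1)"
    using assms by (simp add: pd_mat_def axis_eq_0_iff)
  then show ?thesis by (simp add: matrix_vector_mult_basis inner_axis' column_def)
qed

text \<open>One step of Cholesky elimination: the quadratic form of the Schur complement
  \<open>A - v v\<^sup>T\<close> is that of \<open>A\<close> at a shifted vector, so it inherits positivity.\<close>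

lemma quadratic_form_pivot_elimination:
  fixes A :: "real^'n^'n"
  assumes "sym_mat A" "0 < A $ c $ c"
  defines "v \<equiv> (\<chi> b. A $ b $ c / sqrt (A $ c $ c))"
  shows "x \<bullet> ((\<chi> a b. A $ a $ b - v $ a * v $ b) *v x)
    = (x - ((A *v x) $ c / A $ c $ c) *\<^sub>R axis c 1) \<bullet> (A *v (x - ((A *v x) $ c / A $ c $ c) *\<^sub>R axis c 1))"
proof -
  have "v \<bullet> x = (A *v x) $ c / sqrt (A $ c $ c)"
    using assms(1) by (simp add: v_def inner_vec_def matrix_vector_mult_def sum_divide_distrib
        sym_mat_def mult.commute)
  then have "(v \<bullet> x)\<^sup>2 = ((A *v x) $ c)\<^sup>2 / A $ c $ c"
    using assms(2) by (simp add: power_divide)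
  moreover have "x \<bullet> ((\<chi> a b. A $ a $ b - v $ a * v $ b) *v x) = x \<bullet> (A *v x) - (v \<bullet> x)\<^sup>2"
    by (simp add: inner_vec_def matrix_vector_mult_def power2_eq_square sum_product
        algebra_simps sum_subtractf sum_distrib_left)
  ultimately have "x \<bullet> ((\<chi> a b. A $ a $ b - v $ a * v $ b) *v x)
      = x \<bullet> (A *v x) - ((A *v x) $ c)\<^sup>2 / A $ c $ c"
    by simp
  also have "\<dots> = (x - ((A *v x) $ c / A $ c $ c) *\<^sub>R axis c 1)
      \<bullet> (A *v (x - ((A *v x) $ c / A $ c $ c) *\<^sub>R axis c 1))"
    using assms(2) unfolding inner_matrix_vector_mult_diff_axis[OF assms(1)]
    by (simp add: field_simps power2_eq_square)
  finally show ?thesis .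
qed

lemma gram_decomposition_on:
  fixes A :: "real^'n^'n"
  assumes "sym_mat A" "\<And>a b. a \<notin> I \<or> b \<notin> I \<Longrightarrow> A $ a $ b = 0"
    and "\<And>x. x \<noteq> 0 \<Longrightarrow> (\<And>b. b \<notin> I \<Longrightarrow> x $ b = 0) \<Longrightarrow> 0 < x \<bullet> (A *v x)"
  shows "\<exists>w. \<forall>a b. A $ a $ b = (\<Sum>k\<in>I. w k $ a * w k $ b)"
  using finite[of I] assms
proof (induction I arbitrary: A rule: finite_induct)
  case empty
  then show ?case by auto
next
  case (insert c I)
  have "0 < axis c 1 \<bullet> (A *v axis c 1)"
    by (rule insert.prems(3)) (auto simp: axis_def vec_eq_iff)
  then have pivot: "0 < A $ c $ c"
    by (simp add: matrix_vector_mult_basis inner_axis' column_def)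
  define v :: "real^'n" where "v = (\<chi> b. A $ b $ c / sqrt (A $ c $ c))"
  define A' :: "real^'n^'n" where "A' = (\<chi> a b. A $ a $ b - v $ a * v $ b)"
  have "sym_mat A'"
    using insert.prems(1) by (simp add: sym_mat_def A'_def mult.commute)
  moreover have "A' $ a $ b = 0" if "a \<notin> I \<or> b \<notin> I" for a b
    using that pivot insert.prems(1,2)
    by (cases "a = c \<or> b = c") (auto simp: A'_def v_def sym_mat_def)
  moreover have "0 < x \<bullet> (A' *v x)" if x: "x \<noteq> 0" "\<And>b. b \<notin> I \<Longrightarrow> x $ b = 0" for x
  proof -
    define y where "y = x - ((A *v x) $ c / A $ c $ c) *\<^sub>R axis c 1"
    obtain b where "x $ b \<noteq> 0" using x(1) by (auto simp: vec_eq_iff)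
    with x(2) insert.hyps(2) have "y $ b \<noteq> 0" by (auto simp: y_def axis_def)
    moreover have "y $ b = 0" if "b \<notin> insert c I" for b
      using that x(2) by (simp add: y_def axis_def)
    ultimately have "0 < y \<bullet> (A *v y)" using insert.prems(3) by (metis zero_index)
    then show ?thesis
      unfolding A'_def v_def quadratic_form_pivot_elimination[OF insert.prems(1) pivot] y_def .
  qed
  ultimately obtain w where w: "\<forall>a b. A' $ a $ b = (\<Sum>k\<in>I. w k $ a * w k $ b)"
    using insert.IH by blast
  have "(\<Sum>k\<in>I. (w(c := v)) k $ a * (w(c := v)) k $ b) = (\<Sum>k\<in>I. w k $ a * w k $ b)" for a b
    using insert.hyps(2) by (intro sum.cong) auto
  then have "A $ a $ b = (\<Sum>k\<in>insert c I. (w(c := v)) k $ a * (w(c := v)) k $ b)" for a b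
    using insert.hyps w[rule_format, of a b] by (simp add: A'_def)
  then show ?case by blast
qed

lemma pd_mat_gram:
  fixes A :: "real^'n^'n"
  assumes "pd_mat A"
  obtains W :: "real^'n^'n" where "A = W ** transpose W"
proof -
  have "\<exists>w. \<forall>a b. A $ a $ b = (\<Sum>k\<in>(UNIV :: 'n set). w k $ a * w k $ b)"
    by (rule gram_decomposition_on) (use assms in \<open>auto simp: pd_mat_def\<close>)
  then obtain w where w: "\<forall>a b. A $ a $ b = (\<Sum>k\<in>(UNIV :: 'n set). w k $ a * w k $ b)" ..
  have "A = (\<chi> a k. w k $ a) ** transpose (\<chi> a k. w k $ a)"
    by (simp add: vec_eq_iff matrix_matrix_mult_def transpose_def w)
  then show ?thesis by (rule that)
qed

lemma pd_mat_imp_invertible: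
  fixes A :: "real^'n^'n"
  assumes "pd_mat A"
  shows "invertible A"
proof -
  have "x = 0" if "A *v x = 0" for x
    using assms that unfolding pd_mat_def by force
  then show ?thesis
    using matrix_left_invertible_ker invertible_left_inverse by blast
qed

lemma sym_mat_matrix_inv:
  fixes A :: "real^'n^'n"
  assumes "sym_mat A" "invertible A"
  shows "sym_mat (matrix_inv A)"
proof -
  let ?B = "transpose (matrix_inv A)"
  have "?B ** A = mat 1"
    using matrix_inv_right[OF assms(2)] assms(1)
    by (metis matrix_transpose_mul sym_mat_iff_transpose_eq transpose_mat)
  then have "matrix_inv A = (?B ** A) ** matrix_inv A" by simp
  also have "\<dots> = ?B"
    by (simp add: matrix_inv_right[OF assms(2)] flip: matrix_mul_assoc)
  finally show ?thesis by (simp add: sym_mat_iff_transpose_eq)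
qed

lemma pd_mat_matrix_inv:
  fixes A :: "real^'n^'n"
  assumes "pd_mat A"
  shows "pd_mat (matrix_inv A)"
proof -
  have inv: "invertible A" by (rule pd_mat_imp_invertible[OF assms])
  have "0 < x \<bullet> (matrix_inv A *v x)" if "x \<noteq> 0" for x
  proof -
    define y where "y = matrix_inv A *v x"
    have x: "x = A *v y"
      using matrix_inv_right[OF inv] by (simp add: y_def matrix_vector_mul_assoc)
    with that have "y \<noteq> 0" by auto
    then have "0 < y \<bullet> (A *v y)"
      using assms unfolding pd_mat_def by auto
    moreover have "x \<bullet> (matrix_inv A *v x) = (A *v y) \<bullet> y"
      by (simp add: y_def[symmetric] x[symmetric])
    ultimately show ?thesis by (simp add: inner_commute)
  qed
  then show ?thesis
    using sym_mat_matrix_inv[OF _ inv] assms unfolding pd_mat_def by auto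
qed

lemma pd_mat_det_pos:
  fixes A :: "real^'n^'n"
  assumes "pd_mat A"
  shows "0 < det A"
proof -
  obtain W :: "real^'n^'n" where "A = W ** transpose W" by (rule pd_mat_gram[OF assms])
  then have "det A = (det W)\<^sup>2" by (simp add: det_mul power2_eq_square)
  moreover have "det A \<noteq> 0"
    using pd_mat_imp_invertible[OF assms] invertible_det_nz by blast
  ultimately show ?thesis by simp
qed

lemma trace_pd_sandwich_eq_0D:
  fixes A B D :: "real^'n^'n"
  assumes A: "pd_mat A" and B: "pd_mat B"
    and trace: "trace (A ** D ** B ** transpose D) = 0"
  shows "D = 0"
proof -
  obtain W :: "real^'n^'n" where W: "A = W ** transpose W" by (rule pd_mat_gram[OF A])
  define Z where "Z = transpose D ** W"
  have "trace (A ** D ** B ** transpose D) = trace (W ** (transpose W ** D ** B ** transpose D))"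
    by (simp add: W matrix_mul_assoc)
  also have "\<dots> = trace ((transpose W ** D ** B ** transpose D) ** W)"
    by (rule trace_mul_sym)
  also have "\<dots> = trace (transpose Z ** B ** Z)"
    by (simp add: Z_def matrix_transpose_mul matrix_mul_assoc)
  finally have "(\<Sum>k\<in>UNIV. column k Z \<bullet> (B *v column k Z)) = 0"
    using trace by (simp add: trace_transpose_mult_mult)
  moreover have "0 \<le> x \<bullet> (B *v x)" for x
    using B unfolding pd_mat_def by (cases "x = 0") (auto intro: less_imp_le)
  ultimately have "column k Z \<bullet> (B *v column k Z) = 0" for k
    by (simp add: sum_nonneg_eq_0_iff)
  then have "column k Z = 0" for k
    using B unfolding pd_mat_def by force
  then have "Z = 0"
    by (simp add: vec_eq_iff column_def)
  then have "transpose D ** A = 0"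
    by (simp add: W Z_def matrix_mul_assoc)
  then have "transpose D = transpose D ** (A ** matrix_inv A)"
    by (simp add: matrix_inv_right[OF pd_mat_imp_invertible[OF A]])
  also have "\<dots> = 0" by (simp add: matrix_mul_assoc \<open>transpose D ** A = 0\<close>)
  finally show ?thesis by (metis mat_0 transpose_mat transpose_transpose)
qed

lemma pd_mat_coercive:
  fixes A :: "real^'n^'n"
  assumes "pd_mat A"
  obtains m where "0 < m" "\<And>x. m * (norm x)\<^sup>2 \<le> x \<bullet> (A *v x)"
proof -
  let ?q = "\<lambda>x::real^'n. x \<bullet> (A *v x)"
  have "sphere (0::real^'n) 1 \<noteq> {}" by simp
  moreover have "continuous_on (sphere 0 1) ?q"
    by (intro continuous_intros matrix_vector_mult_linear_continuous_on continuous_on_inner)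
  ultimately obtain x0 where x0: "x0 \<in> sphere 0 1" and min: "\<forall>y\<in>sphere 0 1. ?q x0 \<le> ?q y"
    using continuous_attains_inf[OF compact_sphere] by blast
  have "x0 \<noteq> 0" using x0 by auto
  then have "0 < ?q x0" using assms unfolding pd_mat_def by auto
  moreover have "?q x0 * (norm x)\<^sup>2 \<le> ?q x" for x
  proof (cases "x = 0")
    case False
    define u where "u = (1 / norm x) *\<^sub>R x"
    have "u \<in> sphere 0 1" using False by (simp add: u_def)
    then have "?q x0 \<le> ?q u" using min by blast
    moreover have "?q x = (norm x)\<^sup>2 * ?q u"
      using False by (simp add: u_def matrix_vector_mult_scaleR power2_eq_square field_simps)
    ultimately show ?thesis by (metis mult.commute mult_right_mono zero_le_power2)
  qed simp
  ultimately show ?thesis by (rule that)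
qed

lemma pd_mat_perturb:
  fixes A E :: "real^'n^'n"
  assumes A: "pd_mat A" and E: "sym_mat E"
  obtains \<delta> where "0 < \<delta>" "\<And>t. \<bar>t\<bar> < \<delta> \<Longrightarrow> pd_mat (A + t *\<^sub>R E)"
proof -
  obtain m where m: "0 < m" "\<And>x. m * (norm x)\<^sup>2 \<le> x \<bullet> (A *v x)"
    using pd_mat_coercive[OF A] by blast
  obtain C where C: "0 < C" "\<And>x. norm (E *v x) \<le> norm x * C"
    using bounded_linear.pos_bounded[OF matrix_vector_mul_bounded_linear[of E]] by blast
  have "pd_mat (A + t *\<^sub>R E)" if t: "\<bar>t\<bar> < m / C" for t
  proof -
    have "0 < x \<bullet> ((A + t *\<^sub>R E) *v x)" if "x \<noteq> 0" for x
    proof -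
      have "\<bar>x \<bullet> (E *v x)\<bar> \<le> norm x * norm (E *v x)"
        by (rule Cauchy_Schwarz_ineq2)
      also have "\<dots> \<le> norm x * (norm x * C)"
        using C(2) by (simp add: mult_left_mono)
      finally have "\<bar>t * (x \<bullet> (E *v x))\<bar> \<le> \<bar>t\<bar> * (norm x * (norm x * C))"
        by (simp add: abs_mult mult_left_mono)
      also have "\<dots> < m * (norm x)\<^sup>2"
        using t C(1) that by (simp add: field_simps power2_eq_square)
      finally show ?thesis
        using m(2)[of x] by (simp add: matrix_vector_mult_add_rdistrib inner_add_right
            flip: scaleR_matrix_vector_assoc)
    qed
    then show ?thesis
      using A E by (simp add: pd_mat_def sym_mat_def)
  qed
  moreover have "0 < m / C" using m C by simp
  ultimately show ?thesis using that by blast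
qed

section \<open>Uniqueness of the maximum likelihood estimator\<close>

lemma pd_mat_eqI_matrix_inv:
  fixes K1 K2 :: "real^'n^'n"
  assumes pd1: "pd_mat K1" and pd2: "pd_mat K2"
    and agree: "\<And>a b. K1 $ a $ b \<noteq> K2 $ a $ b \<Longrightarrow> matrix_inv K1 $ a $ b = matrix_inv K2 $ a $ b"
  shows "K1 = K2"
proof -
  define D where "D = K1 - K2"
  have "matrix_inv K1 ** D ** matrix_inv K2
      = (matrix_inv K1 ** K1) ** matrix_inv K2 - matrix_inv K1 ** (K2 ** matrix_inv K2)"
    by (simp add: D_def matrix_diff_ldistrib matrix_diff_rdistrib matrix_mul_assoc)
  also have "\<dots> = matrix_inv K2 - matrix_inv K1"
    by (simp add: matrix_inv_left matrix_inv_right pd_mat_imp_invertible pd1 pd2)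
  finally have sandwich: "matrix_inv K1 ** D ** matrix_inv K2 = matrix_inv K2 - matrix_inv K1" .
  have entrywise: "(matrix_inv K2 $ a $ b - matrix_inv K1 $ a $ b) * D $ a $ b = 0" for a b
    using agree[of a b] by (cases "K1 $ a $ b = K2 $ a $ b") (simp_all add: D_def)
  have "trace ((matrix_inv K2 - matrix_inv K1) ** transpose D) = 0"
    by (simp add: trace_matrix_mult transpose_def entrywise)
  then have "D = 0"
    using trace_pd_sandwich_eq_0D[OF pd_mat_matrix_inv[OF pd1] pd_mat_matrix_inv[OF pd2]]
    by (simp add: sandwich)
  then show ?thesis by (simp add: D_def)
qed

lemma ggm_mle_unique:
  assumes "ggm_mle E Sh K1" "ggm_mle E Sh K2"
  shows "K1 = K2"
proof (rule pd_mat_eqI_matrix_inv)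
  show "pd_mat K1" "pd_mat K2"
    using assms by (simp_all add: ggm_mle_def)
  fix a b
  assume "K1 $ a $ b \<noteq> K2 $ a $ b"
  then have "a = b \<or> E a b"
    using assms unfolding ggm_mle_def by force
  then show "matrix_inv K1 $ a $ b = matrix_inv K2 $ a $ b"
    using assms unfolding ggm_mle_def by (metis ereal.inject)
qed

section \<open>Derivative of the log-determinant\<close>

lemma prod_delta_permutation_eq_0:
  assumes "p permutes (UNIV :: 'n::finite set)" "p \<noteq> id"
  shows "(\<Prod>j\<in>UNIV - {i}. if j = p j then 1 else 0 :: real) = 0"
proof -
  obtain j0 where j0: "p j0 \<noteq> j0" using assms(2) by (auto simp: fun_eq_iff)
  have "\<exists>j\<in>UNIV - {i}. p j \<noteq> j"
  proof (cases "j0 = i")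
    case True
    then have "p (p i) \<noteq> p i"
      using j0 permutes_inj[OF assms(1)] by (metis injD)
    with j0 True show ?thesis by (intro bexI[of _ "p i"]) auto
  qed (use j0 in blast)
  then obtain j where "j \<in> UNIV - {i}" "p j \<noteq> j" ..
  then show ?thesis by (intro prod_zero[OF _ bexI[of _ j]]) auto
qed

text \<open>Only the identity permutation contributes to the derivative of the Leibniz expansion.\<close>

lemma has_real_derivative_det_mat_1_add:
  fixes M :: "real^'n^'n"
  shows "((\<lambda>t. det (mat 1 + t *\<^sub>R M)) has_real_derivative trace M) (at 0)"
proof -
  let ?P = "{p. p permutes (UNIV :: 'n set)}"
  let ?\<delta> = "\<lambda>i j. if i = j then 1 else 0 :: real"
  have det_eq: "det (mat 1 + t *\<^sub>R M)
      = (\<Sum>p\<in>?P. of_int (sign p) * (\<Prod>i\<in>UNIV. ?\<delta> i (p i) + t * M $ i $ p i))" for t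
    by (simp add: det_def mat_def)
  have "((\<lambda>t. \<Sum>p\<in>?P. of_int (sign p) * (\<Prod>i\<in>UNIV. ?\<delta> i (p i) + t * M $ i $ p i))
      has_real_derivative (\<Sum>p\<in>?P. of_int (sign p) *
        (\<Sum>i\<in>UNIV. M $ i $ p i * (\<Prod>j\<in>UNIV - {i}. ?\<delta> j (p j) + 0 * M $ j $ p j)))) (at 0)"
    by (intro DERIV_sum DERIV_cmult has_field_derivative_prod) (auto intro!: derivative_eq_intros)
  also have "(\<Sum>p\<in>?P. of_int (sign p) *
        (\<Sum>i\<in>UNIV. M $ i $ p i * (\<Prod>j\<in>UNIV - {i}. ?\<delta> j (p j) + 0 * M $ j $ p j)))
      = (\<Sum>p\<in>?P. if p = id then trace M else 0)"
  proof (intro sum.cong refl)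
    fix p assume "p \<in> ?P"
    then show "of_int (sign p) *
        (\<Sum>i\<in>UNIV. M $ i $ p i * (\<Prod>j\<in>UNIV - {i}. ?\<delta> j (p j) + 0 * M $ j $ p j))
      = (if p = id then trace M else 0)"
      by (cases "p = id") (simp_all add: sign_id trace_def prod_delta_permutation_eq_0)
  qed
  also have "\<dots> = trace M"
    using permutes_id[of "UNIV :: 'n set"] by (simp add: sum.delta')
  finally show ?thesis by (simp only: det_eq)
qed

lemma has_real_derivative_ln_det:
  fixes K E :: "real^'n^'n"
  assumes "invertible K" "0 < det K"
  shows "((\<lambda>t. ln (det (K + t *\<^sub>R E))) has_real_derivative trace (matrix_inv K ** E)) (at 0)"
proof -
  define g where "g t = det (mat 1 + t *\<^sub>R (matrix_inv K ** E))" for t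
  have "K ** (mat 1 + t *\<^sub>R (matrix_inv K ** E)) = K + t *\<^sub>R E" for t
    by (simp add: matrix_add_ldistrib matrix_scalar_ac matrix_mul_assoc matrix_inv_right[OF assms(1)]
        flip: scalar_matrix_assoc)
  then have det_eq: "det (K + t *\<^sub>R E) = det K * g t" for t
    by (metis det_mul g_def)
  have "g 0 = 1" by (simp add: g_def)
  moreover have "(g has_real_derivative trace (matrix_inv K ** E)) (at 0)"
    unfolding g_def by (rule has_real_derivative_det_mat_1_add)
  ultimately have "((\<lambda>t. ln (det K * g t)) has_real_derivative
      1 / (det K * g 0) * (det K * trace (matrix_inv K ** E))) (at 0)"
    using assms(2) by (intro DERIV_chain2[where f = ln] DERIV_ln_divide DERIV_cmult) simp_all
  then show ?thesis using assms(2) by (simp add: det_eq \<open>g 0 = 1\<close>)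
qed

lemma local_min_neg_ln_det_imp_trace_eq:
  fixes K M E :: "real^'n^'n"
  assumes "pd_mat K" "0 < \<delta>"
    and local_min: "\<And>t. \<bar>t\<bar> < \<delta> \<Longrightarrow>
      - ln (det K) + trace (M ** K) \<le> - ln (det (K + t *\<^sub>R E)) + trace (M ** (K + t *\<^sub>R E))"
  shows "trace (matrix_inv K ** E) = trace (M ** E)"
proof -
  let ?\<phi> = "\<lambda>t. - ln (det (K + t *\<^sub>R E)) + trace (M ** (K + t *\<^sub>R E))"
  have "((\<lambda>t. trace (M ** K) + t * trace (M ** E)) has_real_derivative trace (M ** E)) (at 0)"
    by (auto intro!: derivative_eq_intros)
  then have "(?\<phi> has_real_derivative - trace (matrix_inv K ** E) + trace (M ** E)) (at 0)"
    unfolding trace_mult_add_scaleR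
    by (intro DERIV_add DERIV_minus has_real_derivative_ln_det pd_mat_imp_invertible pd_mat_det_pos
        assms(1))
  moreover have "\<forall>t. \<bar>0 - t\<bar> < \<delta> \<longrightarrow> ?\<phi> 0 \<le> ?\<phi> t"
    using local_min by simp
  ultimately have "- trace (matrix_inv K ** E) + trace (M ** E) = 0"
    using DERIV_local_min assms(2) by blast
  then show ?thesis by simp
qed

section \<open>The penalty on a sign class\<close>

text \<open>On matrices with the sign pattern of \<open>k\<close>, a finite penalty term \<open>max (l y) (u y)\<close> is
  linear in \<open>y\<close> with slope \<open>pen_slope l u k\<close>; the value chosen for \<open>k = 0\<close> is irrelevant.\<close>

definition pen_slope :: "ereal \<Rightarrow> ereal \<Rightarrow> real \<Rightarrow> real" where
  "pen_slope l u k = (if 0 < k then real_of_ereal u else if k < 0 then real_of_ereal l else 0)"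

definition pen_slopes :: "ereal^'n^'n \<Rightarrow> ereal^'n^'n \<Rightarrow> real^'n^'n \<Rightarrow> real^'n^'n" where
  "pen_slopes L U K = (\<chi> a b. pen_slope (L $ a $ b) (U $ a $ b) (K $ a $ b))"

lemma max_mult_ereal_eq_pen_slope:
  fixes l u :: ereal
  assumes "l \<le> 0" "0 \<le> u" "max (l * ereal k) (u * ereal k) \<noteq> \<infinity>" "sgn y = sgn k"
  shows "max (l * ereal y) (u * ereal y) = ereal (pen_slope l u k * y)"
  using assms by (cases l; cases u) (auto simp: pen_slope_def sgn_if max_def mult_le_0_iff split: if_splits)

lemma ereal_add_pen_slope:
  fixes l u :: ereal
  assumes "l \<le> 0" "0 \<le> u" "max (l * ereal k) (u * ereal k) \<noteq> \<infinity>" "k \<noteq> 0"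
  shows "ereal (s + pen_slope l u k) = (if k < 0 then ereal s + l else ereal s + u)"
  using assms by (cases l; cases u) (auto simp: pen_slope_def max_def split: if_splits)

lemma sym_mat_pen_slopes:
  assumes "sym_mat L" "sym_mat U" "sym_mat K"
  shows "sym_mat (pen_slopes L U K)"
  using assms by (simp add: sym_mat_def pen_slopes_def)

lemma pen_obj_mat_1: "pen_obj S L U (mat 1) = ereal (trace S)"
proof -
  have "max (L $ a $ b * ereal (mat 1 $ a $ b)) (U $ a $ b * ereal (mat 1 $ a $ b)) = 0"
    if "b \<noteq> a" for a b
    using that by (simp add: mat_def zero_ereal_def[symmetric])
  then show ?thesis by (simp add: pen_obj_def)
qed

lemma pen_obj_minimizer_finite:
  assumes "\<And>X. pd_mat X \<Longrightarrow> pen_obj S L U K \<le> pen_obj S L U X"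
  shows "pen_obj S L U K \<noteq> \<infinity>"
proof -
  have "pen_obj S L U K \<le> ereal (trace S)"
    using assms[OF pd_mat_mat_1] by (simp add: pen_obj_mat_1)
  then show ?thesis by auto
qed

lemma pen_obj_finite_imp_term_finite:
  assumes "pen_obj S L U K \<noteq> \<infinity>" "a \<noteq> b"
  shows "max (L $ a $ b * ereal (K $ a $ b)) (U $ a $ b * ereal (K $ a $ b)) \<noteq> \<infinity>"
  using assms by (auto simp: pen_obj_def sum_Pinfty)

lemma pen_obj_eq_on_sign_class:
  fixes S K X :: "real^'n^'n"
  assumes LU: "\<And>a b. a \<noteq> b \<Longrightarrow> L $ a $ b \<le> 0 \<and> 0 \<le> U $ a $ b"
    and diag: "\<And>a. L $ a $ a = 0" "\<And>a. U $ a $ a = 0"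
    and finite: "pen_obj S L U K \<noteq> \<infinity>"
    and sign: "\<And>a b. sgn (X $ a $ b) = sgn (K $ a $ b)"
    and sym: "sym_mat X"
  shows "pen_obj S L U X = ereal (- ln (det X) + trace ((S + pen_slopes L U K) ** X))"
proof -
  let ?C = "pen_slopes L U K"
  have "max (L $ a $ b * ereal (X $ a $ b)) (U $ a $ b * ereal (X $ a $ b))
      = ereal (?C $ a $ b * X $ a $ b)" if "b \<noteq> a" for a b
    using that LU sign pen_obj_finite_imp_term_finite[OF finite]
    by (simp add: pen_slopes_def max_mult_ereal_eq_pen_slope)
  then have "(\<Sum>a\<in>UNIV. \<Sum>b\<in>UNIV - {a}.
        max (L $ a $ b * ereal (X $ a $ b)) (U $ a $ b * ereal (X $ a $ b)))
      = ereal (\<Sum>a\<in>UNIV. \<Sum>b\<in>UNIV - {a}. ?C $ a $ b * X $ a $ b)"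
    by (simp add: sum_ereal)
  also have "(\<Sum>a\<in>UNIV. \<Sum>b\<in>UNIV - {a}. ?C $ a $ b * X $ a $ b) = trace (?C ** X)"
  proof -
    have "?C $ a $ a = 0" for a
      using diag by (simp add: pen_slopes_def pen_slope_def)
    then show ?thesis
      using sym by (simp add: trace_matrix_mult sum_diff1 sym_mat_def)
  qed
  finally show ?thesis
    by (simp add: pen_obj_def matrix_add_rdistrib trace_add)
qed

section \<open>Stationarity of the penalized estimator\<close>

lemma pen_obj_minimizer_inverse_entry:
  fixes S K :: "real^'n^'n"
  assumes S: "sym_mat S" and L: "sym_mat L" and U: "sym_mat U"
    and LU: "\<And>a b. a \<noteq> b \<Longrightarrow> L $ a $ b \<le> 0 \<and> 0 \<le> U $ a $ b"
    and diag: "\<And>a. L $ a $ a = 0" "\<And>a. U $ a $ a = 0"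
    and K: "pd_mat K" and minimizer: "\<And>X. pd_mat X \<Longrightarrow> pen_obj S L U K \<le> pen_obj S L U X"
    and nz: "K $ i $ j \<noteq> 0"
  shows "matrix_inv K $ i $ j = (S + pen_slopes L U K) $ i $ j"
proof -
  let ?E = "sym_unit_mat i j :: real^'n^'n"
  let ?M = "S + pen_slopes L U K"
  have symK: "sym_mat K" using K by (simp add: pd_mat_def)
  obtain \<delta>1 where \<delta>1: "0 < \<delta>1" "\<And>t. \<bar>t\<bar> < \<delta>1 \<Longrightarrow> pd_mat (K + t *\<^sub>R ?E)"
    using pd_mat_perturb[OF K sym_mat_sym_unit_mat] by blast
  define \<delta> where "\<delta> = min \<delta>1 \<bar>K $ i $ j\<bar>"
  have "0 < \<delta>" using \<delta>1(1) nz by (simp add: \<delta>_def)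
  have pen_eq: "pen_obj S L U (K + t *\<^sub>R ?E)
      = ereal (- ln (det (K + t *\<^sub>R ?E)) + trace (?M ** (K + t *\<^sub>R ?E)))"
    if "\<bar>t\<bar> < \<delta>" for t
  proof (rule pen_obj_eq_on_sign_class[OF LU diag pen_obj_minimizer_finite[OF minimizer]])
    show "sgn ((K + t *\<^sub>R ?E) $ a $ b) = sgn (K $ a $ b)" for a b
      using that symK by (intro sgn_add_scaleR_sym_unit_mat) (simp_all add: \<delta>_def)
    show "sym_mat (K + t *\<^sub>R ?E)"
      using that \<delta>1(2) by (simp add: \<delta>_def pd_mat_def)
  qed
  have "- ln (det K) + trace (?M ** K) \<le> - ln (det (K + t *\<^sub>R ?E)) + trace (?M ** (K + t *\<^sub>R ?E))"
    if "\<bar>t\<bar> < \<delta>" for t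
  proof -
    have "pen_obj S L U K \<le> pen_obj S L U (K + t *\<^sub>R ?E)"
      using that by (intro minimizer \<delta>1(2)) (simp add: \<delta>_def)
    then show ?thesis using pen_eq[of 0] pen_eq[OF that] \<open>0 < \<delta>\<close> by simp
  qed
  then have "trace (matrix_inv K ** ?E) = trace (?M ** ?E)"
    by (rule local_min_neg_ln_det_imp_trace_eq[OF K \<open>0 < \<delta>\<close>])
  moreover have "sym_mat (matrix_inv K)"
    using pd_mat_matrix_inv[OF K] by (simp add: pd_mat_def)
  moreover have "sym_mat ?M"
    using S sym_mat_pen_slopes[OF L U symK] by (simp add: sym_mat_def)
  ultimately show ?thesis by (simp add: trace_mult_sym_unit_mat split: if_splits)
qed

lemma shat_eq_pen_slopes:
  assumes LU: "\<And>a b. a \<noteq> b \<Longrightarrow> L $ a $ b \<le> 0 \<and> 0 \<le> U $ a $ b"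
    and diag: "\<And>a. L $ a $ a = 0" "\<And>a. U $ a $ a = 0"
    and finite: "pen_obj S L U K \<noteq> \<infinity>" and nz: "K $ i $ j \<noteq> 0"
  shows "shat S L U K i j = ereal ((S + pen_slopes L U K) $ i $ j)"
proof (cases "i = j")
  case True
  then show ?thesis using diag by (simp add: shat_def pen_slopes_def pen_slope_def)
next
  case False
  then show ?thesis
    using ereal_add_pen_slope[OF _ _ pen_obj_finite_imp_term_finite[OF finite False] nz] LU[OF False]
    by (simp add: shat_def pen_slopes_def)
qed

theorem corollary8p10:
  fixes S Khat :: "real^'n^'n" and L U :: "ereal^'n^'n"
  assumes "psd_mat S"
    and "sym_mat L" and "sym_mat U"
    and "\<And>i j. i \<noteq> j \<Longrightarrow> L $ i $ j \<le> 0 \<and> 0 \<le> U $ i $ j"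
    and "\<And>i. L $ i $ i = 0" and "\<And>i. U $ i $ i = 0"
    and "pd_mat Khat"
    and "\<And>K. pd_mat K \<Longrightarrow> pen_obj S L U Khat \<le> pen_obj S L U K"
  shows "ggm_mle (\<lambda>i j. i \<noteq> j \<and> Khat $ i $ j \<noteq> 0) (shat S L U Khat) Khat
    \<and> (\<forall>K. ggm_mle (\<lambda>i j. i \<noteq> j \<and> Khat $ i $ j \<noteq> 0) (shat S L U Khat) K \<longrightarrow> K = Khat)"
proof -
  have "ereal (matrix_inv Khat $ i $ j) = shat S L U Khat i j" if "Khat $ i $ j \<noteq> 0" for i j
    using pen_obj_minimizer_inverse_entry[OF _ assms(2-8) that] assms(1)
      shat_eq_pen_slopes[OF assms(4-6) pen_obj_minimizer_finite[OF assms(8)] that]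
    by (simp add: psd_mat_def)
  moreover have "Khat $ i $ i \<noteq> 0" for i
    using pd_mat_diag_pos[OF assms(7)] by (metis less_irrefl)
  ultimately have "ggm_mle (\<lambda>i j. i \<noteq> j \<and> Khat $ i $ j \<noteq> 0) (shat S L U Khat) Khat"
    using assms(7) by (auto simp: ggm_mle_def)
  then show ?thesis using ggm_mle_unique by blast
qed

end
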